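(* Let $\mathcal{H}$ be a real Hilbert space, let $A\colon \mathcal{H}\rightrightarrows\mathcal{H}$ be maximally monotone, and let $B\colon\mathcal{H}\to\mathcal{H}$ be monotone with $B=\frac{1}{n}\sum_{i=1}^nB_i$ where each $B_i\colon\mathcal{H}\to\mathcal{H}$ is $L$-Lipschitz. Let $x\in(A+B)^{-1}(0)$ and $\lambda \in \left(0,\frac{1}{2L}\right)$. Given $x_0,x_{-1}\in\mathcal{H}$ and indices $i_k\in\{1,\dots,n\}$ (e.g. chosen uniformly at random), let $$x_{k+1} = J_{\lambda A}\bigl( x_k-\lambda B(x_k) - \lambda( B_{i_k}(x_k) - B_{i_k}(x_{k-1})) \bigr)\quad\forall k\in\mathbb{N}.$$ Then there exists $\varepsilon>0$ such that, for all $k\in\mathbb{N}$ (and every realization of the indices), $$\|x_{k+1}-x\|^2+2\lambda\langle B(x_{k+1})-B(x_k),x-x_{k+1}\rangle + \left(\tfrac{1}{2}+\varepsilon\right)\|x_{k+1}-x_k\|^2 \leq \|x_k-x\|^2 + 2\lambda\langle B_{i_k}(x_k)-B_{i_k}(x_{k-1}), x-x_{k}\rangle +\tfrac{1}{2}\|x_{k}-x_{k-1}\|^2.$$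
   Context: $J_{\lambda A}:=(I+\lambda A)^{-1}$ denotes the resolvent of $\lambda A$. *)

theory Defs
  imports "HOL-Analysis.Analysis"
begin

definition monotone_op :: "('a::real_inner \<Rightarrow> 'a set) \<Rightarrow> bool" where
  "monotone_op A \<longleftrightarrow>
     (\<forall>x y u v. u \<in> A x \<longrightarrow> v \<in> A y \<longrightarrow> inner (u - v) (x - y) \<ge> 0)"

definition maximally_monotone :: "('a::real_inner \<Rightarrow> 'a set) \<Rightarrow> bool" where
  "maximally_monotone A \<longleftrightarrow> monotone_op A \<and>
     (\<forall>A'. monotone_op A' \<and> (\<forall>x. A x \<subseteq> A' x) \<longrightarrow> A' = A)"

text \<open>Resolvent J_{lam A} = (I + lam A)^{-1}, as a (single-valued, for maximally monotone A)
  function: the unique z with y \<in> z + lam A z.\<close>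

definition resolvent :: "real \<Rightarrow> ('a::real_inner \<Rightarrow> 'a set) \<Rightarrow> 'a \<Rightarrow> 'a" where
  "resolvent lam A y = (THE z. \<exists>a \<in> A z. y = z + lam *\<^sub>R a)"

end

theory Submission
  imports Defs
begin

(* Testing monotonicity of A at the zero xs and at the new iterate, and monotonicity of B,
   gives the estimate up to the reflected term <B_i(x_k) - B_i(x_{k-1}), x_{k+1} - x_k>.  By
   Cauchy-Schwarz, the Lipschitz bound and 2ab <= a^2 + b^2 that term costs lam L on each of the
   squared step lengths, which leaves the margin eps = 1/2 - lam L > 0.

   The iteration is only meaningful if the resolvent is total, which is Minty's theorem.  Following
   Debrunner and Flor, the balls {z. <z - w, z - (y - lam a)> <= 0}, a in A w, have the finite
   intersection property (by a minimax argument over a convex hull), hence a common point p: in a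
   Hilbert space, points of near-minimal norm in nested convex sets form a Cauchy sequence by the
   parallelogram law.  Maximality of A then gives (y - p) / lam in A p. *)

section \<open>Closed convex sets with the finite intersection property\<close>

lemma infdist_less_approx:
  fixes x :: "'a::metric_space"
  assumes "A \<noteq> {}" "0 < e"
  shows "\<exists>a\<in>A. dist x a < infdist x A + e"
proof -
  have "(INF a\<in>A. dist x a) < infdist x A + e"
    using assms by (simp add: infdist_notempty)
  then show ?thesis
    using assms(1) by (simp add: cINF_less_iff)
qed

lemma convex_norm_le_imp_dist_le:
  fixes a b :: "'a::real_inner"
  assumes "convex K" "a \<in> K" "b \<in> K" "norm a \<le> r" "norm b \<le> r"
  shows "(norm (a - b))\<^sup>2 \<le> 4 * (r\<^sup>2 - (infdist 0 K)\<^sup>2)"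
proof -
  have "midpoint a b \<in> K"
    using convexD[OF assms(1-3), of "1/2" "1/2"] by (simp add: midpoint_def scaleR_add_right)
  then have "infdist 0 K \<le> norm (midpoint a b)"
    using infdist_le[of "midpoint a b" K 0] by simp
  then have "(2 * infdist 0 K)\<^sup>2 \<le> (norm (a + b))\<^sup>2"
    using infdist_nonneg[of 0 K] by (intro power_mono) (auto simp: midpoint_def)
  moreover have "(norm a)\<^sup>2 \<le> r\<^sup>2" "(norm b)\<^sup>2 \<le> r\<^sup>2"
    using assms(4,5) by (auto intro!: power_mono)
  moreover have "(norm (a - b))\<^sup>2 + (norm (a + b))\<^sup>2 = 2 * (norm a)\<^sup>2 + 2 * (norm b)\<^sup>2"
    unfolding power2_norm_eq_inner
    by (simp add: inner_add_left inner_add_right inner_diff_left inner_diff_right inner_commute)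
  ultimately show ?thesis
    by (simp add: power_mult_distrib)
qed

lemma finite_subsets_incseq_SUP:
  fixes D :: "'i set \<Rightarrow> real"
  assumes mono: "\<And>F G. F \<subseteq> G \<Longrightarrow> finite G \<Longrightarrow> G \<subseteq> I \<Longrightarrow> D F \<le> D G"
    and bdd: "bdd_above (D ` {F. finite F \<and> F \<subseteq> I})"
  obtains S where "\<And>n. finite (S n)" "\<And>n. S n \<subseteq> I" "incseq S"
    "(\<lambda>n. D (S n)) \<longlonglongrightarrow> (SUP F\<in>{F. finite F \<and> F \<subseteq> I}. D F)"
proof -
  define \<F> where "\<F> = {F. finite F \<and> F \<subseteq> I}"
  define d where "d = (SUP F\<in>\<F>. D F)"
  have "\<exists>F\<in>\<F>. d - 1 / real (Suc n) < D F" for n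
    using less_cSUP_iff[of \<F> D "d - 1 / real (Suc n)"] bdd by (auto simp: d_def \<F>_def)
  then obtain G where G: "\<And>n. G n \<in> \<F>" "\<And>n. d - 1 / real (Suc n) < D (G n)"
    by metis
  define S where "S n = (\<Union>k\<le>n. G k)" for n
  have S: "S n \<in> \<F>" for n
    using G(1) by (auto simp: S_def \<F>_def)
  have "incseq S"
    unfolding incseq_def S_def by (intro allI impI UN_mono) auto
  moreover have "(\<lambda>n. D (S n)) \<longlonglongrightarrow> d"
  proof (rule tendsto_sandwich)
    have "d - 1 / real (Suc n) \<le> D (S n)" for n
      using G(2)[of n] mono[of "G n" "S n"] S[of n] by (force simp: S_def \<F>_def)
    then show "\<forall>\<^sub>F n in sequentially. d - 1 / real (Suc n) \<le> D (S n)"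
      by simp
    have "D (S n) \<le> d" for n
      unfolding d_def using S[of n] bdd by (intro cSUP_upper) (auto simp: \<F>_def)
    then show "\<forall>\<^sub>F n in sequentially. D (S n) \<le> d"
      by simp
    show "(\<lambda>n. d - 1 / real (Suc n)) \<longlonglongrightarrow> d"
      using tendsto_diff[OF tendsto_const LIMSEQ_Suc[OF lim_1_over_n], of d] by simp
  qed (rule tendsto_const)
  ultimately show ?thesis
    using that S by (auto simp: d_def \<F>_def)
qed

lemma convex_decseq_near_min_norm_converge:
  fixes K :: "nat \<Rightarrow> 'a::{real_inner, complete_space} set"
  assumes convex: "\<And>n. convex (K n)" and "decseq K" "decseq e" "e \<longlonglongrightarrow> 0"
    and inf_K: "(\<lambda>n. infdist 0 (K n)) \<longlonglongrightarrow> d"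
    and p: "\<And>n. p n \<in> K n" "\<And>n. norm (p n) \<le> d + e n"
  obtains l where "\<And>q. (\<And>n. q n \<in> K n) \<Longrightarrow> (\<And>n. norm (q n) \<le> d + e n) \<Longrightarrow> q \<longlonglongrightarrow> l"
proof -
  define \<rho> where "\<rho> n = sqrt (4 * ((d + e n)\<^sup>2 - (infdist 0 (K n))\<^sup>2))" for n
  have "\<rho> \<longlonglongrightarrow> sqrt (4 * ((d + 0)\<^sup>2 - d\<^sup>2))"
    unfolding \<rho>_def by (intro tendsto_intros assms)
  then have \<rho>_tendsto: "\<rho> \<longlonglongrightarrow> 0"
    by simp
  have close: "norm (a - b) \<le> \<rho> n"
    if "a \<in> K n" "b \<in> K n" "norm a \<le> d + e n" "norm b \<le> d + e n" for a b n
    unfolding \<rho>_def using convex_norm_le_imp_dist_le[OF convex that] by (rule real_le_rsqrt)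
  have "Cauchy p"
    unfolding Cauchy_altdef2
  proof (intro allI impI)
    fix r :: real assume "0 < r"
    then obtain N where "\<rho> N < r"
      using order_tendstoD(2)[OF \<rho>_tendsto] eventually_happens' sequentially_bot by blast
    moreover have "dist (p m) (p N) \<le> \<rho> N" if "N \<le> m" for m
      using close[of "p m" N "p N"] p[of m] p[of N] decseqD[OF \<open>decseq K\<close> that]
        decseqD[OF \<open>decseq e\<close> that]
      by (force simp: dist_norm)
    ultimately show "\<exists>N. \<forall>m\<ge>N. dist (p m) (p N) < r"
      by force
  qed
  then obtain l where l: "p \<longlonglongrightarrow> l"
    using Cauchy_convergent_iff convergent_def by blast
  have "q \<longlonglongrightarrow> l" if "\<And>n. q n \<in> K n" "\<And>n. norm (q n) \<le> d + e n" for q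
  proof -
    have "(\<lambda>n. q n - p n) \<longlonglongrightarrow> 0"
      using close[OF that(1) p(1) that(2) p(2)]
      by (intro Lim_null_comparison[OF always_eventually \<rho>_tendsto]) simp
    then show "q \<longlonglongrightarrow> l"
      using tendsto_add[OF l] by fastforce
  qed
  then show ?thesis
    using that by blast
qed

lemma closed_convex_family_Inter_nonempty:
  fixes C :: "'i \<Rightarrow> 'a::{real_inner, complete_space} set"
  assumes "i0 \<in> I" and closed: "\<And>i. i \<in> I \<Longrightarrow> closed (C i)"
    and convex: "\<And>i. i \<in> I \<Longrightarrow> convex (C i)" and "bounded (C i0)"
    and finite_Inter: "\<And>F. finite F \<Longrightarrow> F \<subseteq> I \<Longrightarrow> F \<noteq> {} \<Longrightarrow> (\<Inter>i\<in>F. C i) \<noteq> {}"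
  shows "\<exists>p. \<forall>i\<in>I. p \<in> C i"
proof -
  define X where "X F = (\<Inter>i\<in>insert i0 F. C i)" for F
  define D where "D F = infdist 0 (X F)" for F
  have X_ne: "X F \<noteq> {}" if "finite F" "F \<subseteq> I" for F
    using that \<open>i0 \<in> I\<close> finite_Inter[of "insert i0 F"] by (simp add: X_def)
  obtain M where M: "\<And>z. z \<in> C i0 \<Longrightarrow> norm z \<le> M"
    using \<open>bounded (C i0)\<close> bounded_iff by blast
  have "D F \<le> M" if F: "finite F" "F \<subseteq> I" for F
  proof -
    obtain z where "z \<in> X F" using X_ne[OF F] by blast
    then show ?thesis
      unfolding D_def using infdist_le[of z "X F" 0] M[of z] by (simp add: X_def)
  qed
  then have bdd: "bdd_above (D ` {F. finite F \<and> F \<subseteq> I})"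
    by (auto intro!: bdd_aboveI)
  have D_mono: "D F \<le> D G" if "F \<subseteq> G" "finite G" "G \<subseteq> I" for F G
    unfolding D_def using that X_ne by (intro infdist_mono) (auto simp: X_def)
  obtain S where S: "\<And>n. finite (S n)" "\<And>n. S n \<subseteq> I" "incseq S"
    and D_S: "(\<lambda>n. D (S n)) \<longlonglongrightarrow> (SUP F\<in>{F. finite F \<and> F \<subseteq> I}. D F)"
    using finite_subsets_incseq_SUP[OF D_mono bdd] by blast
  define d where "d = (SUP F\<in>{F. finite F \<and> F \<subseteq> I}. D F)"
  define e where "e n = 1 / real (Suc n)" for n
  have near_min: "\<exists>z\<in>X F. norm z \<le> d + e n" if F: "finite F" "F \<subseteq> I" for F n
  proof -
    obtain z where "z \<in> X F" "norm z < D F + e n"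
      using infdist_less_approx[OF X_ne[OF F], of "e n" 0] by (auto simp: D_def e_def)
    moreover have "D F \<le> d"
      unfolding d_def using F bdd by (intro cSUP_upper) auto
    ultimately show ?thesis
      by force
  qed
  have "\<exists>z\<in>X (S n). norm z \<le> d + e n" for n
    using near_min S by blast
  then obtain p where p: "\<And>n. p n \<in> X (S n)" "\<And>n. norm (p n) \<le> d + e n"
    by metis
  have "convex (X (S n))" for n
    using S(2) \<open>i0 \<in> I\<close> unfolding X_def by (intro convex_INT convex) auto
  moreover have "decseq (\<lambda>n. X (S n))"
    using monoD[OF \<open>incseq S\<close>] by (auto simp: decseq_def X_def)
  moreover have "decseq e" "e \<longlonglongrightarrow> 0"
    unfolding e_def using LIMSEQ_Suc[OF lim_1_over_n] by (auto simp: decseq_def frac_le)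
  moreover have "(\<lambda>n. infdist 0 (X (S n))) \<longlonglongrightarrow> d"
    using D_S by (simp add: D_def d_def)
  ultimately obtain l where
    l: "\<And>q. (\<And>n. q n \<in> X (S n)) \<Longrightarrow> (\<And>n. norm (q n) \<le> d + e n) \<Longrightarrow> q \<longlonglongrightarrow> l"
    by (rule convex_decseq_near_min_norm_converge[of "\<lambda>n. X (S n)" e d p, OF _ _ _ _ _ p]) blast
  have "l \<in> C i" if "i \<in> I" for i
  proof -
    have "\<exists>z\<in>X (insert i (S n)). norm z \<le> d + e n" for n
      using near_min S that by blast
    then obtain q where q: "\<And>n. q n \<in> X (insert i (S n))" "\<And>n. norm (q n) \<le> d + e n"
      by metis
    then have "q \<longlonglongrightarrow> l"
      by (intro l) (auto simp: X_def)
    then show ?thesis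
      using closed[OF that] q(1) closed_sequentially[of "C i" q l] by (auto simp: X_def)
  qed
  then show ?thesis by blast
qed

section \<open>A finite minimax lemma\<close>

lemma continuous_on_Max_finite:
  fixes f :: "'i \<Rightarrow> 'a::topological_space \<Rightarrow> 'b::linorder_topology"
  assumes "finite I" "I \<noteq> {}" "\<And>i. i \<in> I \<Longrightarrow> continuous_on K (f i)"
  shows "continuous_on K (\<lambda>z. Max ((\<lambda>i. f i z) ` I))"
  using assms
proof (induction I rule: finite_ne_induct)
  case (insert i I)
  then show ?case
    by (simp add: Max_insert continuous_on_max)
qed simp

lemma convex_hull_image_finite_weights:
  fixes c :: "'i \<Rightarrow> 'a::real_vector"
  assumes "finite J" "y \<in> convex hull (c ` J)"
  obtains l where "\<And>i. i \<in> J \<Longrightarrow> 0 \<le> l i" "sum l J = 1" "(\<Sum>i\<in>J. l i *\<^sub>R c i) = y"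
proof -
  obtain u where u: "\<And>x. x \<in> c ` J \<Longrightarrow> 0 \<le> u x" "sum u (c ` J) = 1" "(\<Sum>x\<in>c ` J. u x *\<^sub>R x) = y"
    using assms by (auto simp: convex_hull_finite)
  text \<open>Spread the weight of each point evenly over the indices it comes from.\<close>
  define l where "l i = u (c i) / card {j\<in>J. c j = c i}" for i
  have fiber: "(\<Sum>i\<in>{j\<in>J. c j = x}. l i *\<^sub>R f x) = u x *\<^sub>R f x" if "x \<in> c ` J"
    for x and f :: "'a \<Rightarrow> 'b::real_vector"
  proof -
    have "card {j\<in>J. c j = x} \<noteq> 0"
      using that \<open>finite J\<close> by (auto simp: card_eq_0_iff)
    moreover have "(\<Sum>i\<in>{j\<in>J. c j = x}. l i *\<^sub>R f x) = (\<Sum>i\<in>{j\<in>J. c j = x}. (u x / card {j\<in>J. c j = x}) *\<^sub>R f x)"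
      by (intro sum.cong) (auto simp: l_def)
    ultimately show ?thesis
      by (simp add: sum_constant_scaleR)
  qed
  have "(\<Sum>i\<in>J. l i *\<^sub>R f (c i)) = (\<Sum>x\<in>c ` J. u x *\<^sub>R f x)" for f :: "'a \<Rightarrow> 'b::real_vector"
    using sum.image_gen[OF \<open>finite J\<close>, of "\<lambda>i. l i *\<^sub>R f (c i)" c] fiber
    by (auto intro!: sum.cong)
  from this[of "\<lambda>_. 1::real"] this[of id] have "sum l J = 1" "(\<Sum>i\<in>J. l i *\<^sub>R c i) = y"
    using u by simp_all
  moreover have "0 \<le> l i" if "i \<in> J" for i
    using u(1)[of "c i"] that by (simp add: l_def)
  ultimately show ?thesis
    using that by blast
qed

lemma compact_convex_closer_point:
  fixes K :: "'a::real_inner set"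
  assumes "compact K" "convex K" "K \<noteq> {}" "t \<notin> K"
  obtains p where "p \<in> K"
    and "\<And>c e. c \<in> K \<Longrightarrow> 0 < e \<Longrightarrow> e \<le> 1 \<Longrightarrow> dist (t + e *\<^sub>R (p - t)) c < dist t c"
proof -
  obtain p where p: "p \<in> K" "\<And>z. z \<in> K \<Longrightarrow> dist t p \<le> dist t z"
    using continuous_attains_inf[OF \<open>compact K\<close> \<open>K \<noteq> {}\<close> continuous_on_dist[OF continuous_on_const continuous_on_id, of K t]]
    by auto
  have "0 < (norm (p - t))\<^sup>2"
    using p(1) \<open>t \<notin> K\<close> by auto
  moreover have "dist (t + e *\<^sub>R (p - t)) c < dist t c" if "c \<in> K" "0 < e" "e \<le> 1" for c e
  proof -
    have obtuse: "inner (t - p) (c - p) \<le> 0"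
      using any_closest_point_dot[OF \<open>convex K\<close> compact_imp_closed[OF \<open>compact K\<close>] p(1) that(1)] p(2)
      by blast
    have "(dist (t + e *\<^sub>R (p - t)) c)\<^sup>2
        = (dist t c)\<^sup>2 + 2 * e * inner (p - c) (p - t) - e * (2 - e) * (norm (p - t))\<^sup>2"
      unfolding dist_norm power2_norm_eq_inner
      by (simp add: inner_add_left inner_add_right inner_diff_left inner_diff_right inner_commute algebra_simps)
    also have "\<dots> < (dist t c)\<^sup>2"
    proof -
      have "inner (p - c) (p - t) = inner (t - p) (c - p)"
        by (simp add: inner_diff_left inner_diff_right inner_commute)
      then have "2 * e * inner (p - c) (p - t) \<le> 0"
        using obtuse \<open>0 < e\<close> by (simp add: mult_nonneg_nonpos)
      moreover have "0 < e * (2 - e) * (norm (p - t))\<^sup>2"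
        using that \<open>0 < (norm (p - t))\<^sup>2\<close> by simp
      ultimately show ?thesis
        by linarith
    qed
    finally show ?thesis
      by (simp add: power2_less_imp_less)
  qed
  ultimately show ?thesis
    using that p(1) by blast
qed

lemma minimiser_of_max_in_hull_of_active:
  fixes c :: "'i \<Rightarrow> 'a::real_inner" and r :: "'i \<Rightarrow> real"
  assumes "finite S" "convex K" "c ` S \<subseteq> K" "t \<in> K"
    and le_m: "\<And>i. i \<in> S \<Longrightarrow> (dist t (c i))\<^sup>2 - r i \<le> m"
    and max_ge_m: "\<And>z. z \<in> K \<Longrightarrow> \<exists>i\<in>S. m \<le> (dist z (c i))\<^sup>2 - r i"
  shows "t \<in> convex hull (c ` {i\<in>S. (dist t (c i))\<^sup>2 - r i = m})"
proof (rule ccontr)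
  define g where "g i z = (dist z (c i))\<^sup>2 - r i" for i z
  define J where "J = {i\<in>S. g i t = m}"
  assume "t \<notin> convex hull (c ` {i\<in>S. (dist t (c i))\<^sup>2 - r i = m})"
  then have "t \<notin> convex hull (c ` J)"
    by (simp add: J_def g_def)
  moreover have "J \<noteq> {}"
    using max_ge_m[OF \<open>t \<in> K\<close>] le_m by (force simp: J_def g_def)
  ultimately obtain p where "p \<in> convex hull (c ` J)" and closer:
    "\<And>x e. x \<in> convex hull (c ` J) \<Longrightarrow> 0 < e \<Longrightarrow> e \<le> 1 \<Longrightarrow> dist (t + e *\<^sub>R (p - t)) x < dist t x"
    using compact_convex_closer_point[of "convex hull (c ` J)" t] \<open>finite S\<close>
    by (auto simp: J_def finite_imp_compact_convex_hull)
  moreover have "convex hull (c ` J) \<subseteq> K"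
    using \<open>convex K\<close> \<open>c ` S \<subseteq> K\<close> by (intro hull_minimal) (auto simp: J_def)
  ultimately have "p \<in> K"
    by blast
  text \<open>Moving slightly from \<open>t\<close> towards \<open>p\<close> lowers every active constraint and keeps the
    inactive ones below \<open>m\<close>, contradicting the minimality of the maximum at \<open>t\<close>.\<close>
  define t' where "t' e = t + e *\<^sub>R (p - t)" for e :: real
  have small: "\<forall>\<^sub>F e in at_right (0::real). 0 < e \<and> e \<le> 1"
    unfolding eventually_at_right_field by (intro exI[of _ 1]) auto
  have "\<forall>\<^sub>F e in at_right 0. g i (t' e) < m" if "i \<in> S" for i
  proof (cases "i \<in> J")
    case True
    from small show ?thesis
    proof (rule eventually_mono)
      fix e :: real assume "0 < e \<and> e \<le> 1"
      then have "dist (t' e) (c i) < dist t (c i)"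
        unfolding t'_def using True by (intro closer hull_inc) auto
      then have "(dist (t' e) (c i))\<^sup>2 < (dist t (c i))\<^sup>2"
        by (simp add: power_strict_mono)
      then show "g i (t' e) < m"
        using True by (simp add: g_def J_def)
    qed
  next
    case False
    have "((\<lambda>e. g i (t' e)) \<longlongrightarrow> g i (t + 0 *\<^sub>R (p - t))) (at_right 0)"
      unfolding g_def t'_def by (intro tendsto_intros)
    moreover have "g i t < m"
      using le_m[OF that] False that by (auto simp: J_def g_def)
    ultimately show ?thesis
      by (auto dest: order_tendstoD)
  qed
  then have "\<forall>\<^sub>F e in at_right 0. \<forall>i\<in>S. g i (t' e) < m"
    using \<open>finite S\<close> by (intro eventually_ball_finite) auto
  with small obtain e where e: "0 < e" "e \<le> 1" and below: "\<forall>i\<in>S. g i (t' e) < m"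
    using eventually_happens'[OF trivial_limit_at_right_real] eventually_conj by blast
  have "t' e \<in> K"
    using convexD_alt[OF \<open>convex K\<close> \<open>t \<in> K\<close> \<open>p \<in> K\<close>, of e] e
    by (simp add: t'_def algebra_simps)
  then show False
    using max_ge_m below by (force simp: g_def)
qed

lemma finite_balls_common_point:
  fixes c :: "'i \<Rightarrow> 'a::real_inner" and r :: "'i \<Rightarrow> real"
  assumes "finite S" "S \<noteq> {}"
    and barycentre: "\<And>l. (\<And>i. i \<in> S \<Longrightarrow> 0 \<le> l i) \<Longrightarrow> sum l S = 1 \<Longrightarrow>
      (\<Sum>i\<in>S. l i * ((dist (\<Sum>j\<in>S. l j *\<^sub>R c j) (c i))\<^sup>2 - r i)) \<le> 0"
  shows "\<exists>z. \<forall>i\<in>S. (dist z (c i))\<^sup>2 \<le> r i"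
proof -
  define g where "g i z = (dist z (c i))\<^sup>2 - r i" for i z
  define G where "G z = Max ((\<lambda>i. g i z) ` S)" for z
  define K where "K = convex hull (c ` S)"
  have "compact K" "convex K" "K \<noteq> {}"
    using assms(1,2) by (auto simp: K_def finite_imp_compact_convex_hull)
  moreover have "continuous_on K G"
    unfolding G_def g_def using assms(1,2) by (intro continuous_on_Max_finite continuous_intros)
  ultimately obtain t where "t \<in> K" and t_min: "\<And>z. z \<in> K \<Longrightarrow> G t \<le> G z"
    using continuous_attains_inf by metis
  define m where "m = G t"
  have le_m: "g i t \<le> m" if "i \<in> S" for i
    using assms(1) that by (simp add: m_def G_def)
  show ?thesis
  proof (cases "m \<le> 0")
    case True
    then show ?thesis
      using le_m by (intro exI[of _ t]) (force simp: g_def)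
  next
    case False
    define J where "J = {i\<in>S. g i t = m}"
    have "\<exists>i\<in>S. m \<le> g i z" if "z \<in> K" for z
    proof -
      have "G z \<in> (\<lambda>i. g i z) ` S"
        unfolding G_def using assms(1,2) by (intro Max_in) auto
      then show ?thesis
        using t_min[OF that] by (auto simp: m_def)
    qed
    then have "t \<in> convex hull (c ` J)"
      using minimiser_of_max_in_hull_of_active[OF assms(1) \<open>convex K\<close> _ \<open>t \<in> K\<close>, where r = r and m = m] le_m
      by (auto simp: J_def g_def K_def hull_subset)
    then obtain l where l: "\<And>i. i \<in> J \<Longrightarrow> 0 \<le> l i" "sum l J = 1" "(\<Sum>i\<in>J. l i *\<^sub>R c i) = t"
      using convex_hull_image_finite_weights[where J = J and c = c and y = t] assms(1) by (auto simp: J_def)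
    define l' where "l' i = (if i \<in> J then l i else 0)" for i
    have "J \<subseteq> S"
      by (auto simp: J_def)
    have restrict: "(\<Sum>i\<in>S. l' i * f i) = (\<Sum>i\<in>J. l i * f i)" for f
      by (rule sum.mono_neutral_cong_right[OF assms(1) \<open>J \<subseteq> S\<close>]) (auto simp: l'_def)
    have "m = (\<Sum>i\<in>S. l' i * g i t)"
      using l(2) by (simp add: restrict J_def sum_distrib_right[symmetric])
    also have "\<dots> \<le> 0"
    proof -
      have "(\<Sum>j\<in>S. l' j *\<^sub>R c j) = (\<Sum>j\<in>J. l j *\<^sub>R c j)"
        by (rule sum.mono_neutral_cong_right[OF assms(1) \<open>J \<subseteq> S\<close>]) (auto simp: l'_def)
      moreover have "sum l' S = 1"
        using restrict[of "\<lambda>_. 1"] l(2) by simp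
      ultimately show ?thesis
        using barycentre[of l'] l(1,3) by (simp add: l'_def g_def)
    qed
    finally show ?thesis
      using False by simp
  qed
qed

lemma inner_diff_diff_eq_midpoint:
  fixes z w v :: "'a::real_inner"
  shows "inner (z - w) (z - v) = (dist z (midpoint w v))\<^sup>2 - (dist w v / 2)\<^sup>2"
  unfolding dist_norm midpoint_def power2_norm_eq_inner power_divide
  by (simp add: inner_diff_left inner_diff_right inner_add_left inner_add_right inner_commute
      field_simps)

lemma inner_diff_le_0_iff_cball:
  fixes z w v :: "'a::real_inner"
  shows "inner (z - w) (z - v) \<le> 0 \<longleftrightarrow> z \<in> cball (midpoint w v) (dist w v / 2)"
  unfolding inner_diff_diff_eq_midpoint mem_cball
  by (simp add: dist_commute power2_le_iff_abs_le)

lemma sum_weighted_inner_variance: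
  fixes a b :: "'i \<Rightarrow> 'a::real_inner"
  assumes "finite F" "sum l F = 1"
  shows "(\<Sum>i\<in>F. l i * inner (a i) (b i)) - inner (\<Sum>i\<in>F. l i *\<^sub>R a i) (\<Sum>i\<in>F. l i *\<^sub>R b i)
    = (\<Sum>i\<in>F. \<Sum>j\<in>F. l i * l j * inner (a i - a j) (b i - b j)) / 2"
proof -
  define P where "P = (\<Sum>i\<in>F. l i * inner (a i) (b i))"
  define T where "T i j = l i * l j * inner (a i) (b j)" for i j
  have "l i * l j * inner (a i - a j) (b i - b j) = l j * (l i * inner (a i) (b i))
      + l i * (l j * inner (a j) (b j)) - T i j - T j i" for i j
    by (simp add: T_def inner_diff_left inner_diff_right inner_commute algebra_simps)
  then have "(\<Sum>i\<in>F. \<Sum>j\<in>F. l i * l j * inner (a i - a j) (b i - b j))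
      = (\<Sum>i\<in>F. sum l F * (l i * inner (a i) (b i))) + (\<Sum>i\<in>F. l i * P)
        - (\<Sum>i\<in>F. \<Sum>j\<in>F. T i j) - (\<Sum>i\<in>F. \<Sum>j\<in>F. T j i)"
    by (simp add: sum.distrib sum_subtractf sum_distrib_left sum_distrib_right P_def)
  also have "(\<Sum>i\<in>F. \<Sum>j\<in>F. T i j) = (\<Sum>i\<in>F. \<Sum>j\<in>F. T j i)"
    by (rule sum.swap)
  also have "(\<Sum>i\<in>F. \<Sum>j\<in>F. T j i) = inner (\<Sum>i\<in>F. l i *\<^sub>R a i) (\<Sum>i\<in>F. l i *\<^sub>R b i)"
    by (simp add: T_def inner_sum_left inner_sum_right sum_distrib_left mult_ac)
  finally show ?thesis
    using assms(2) by (simp add: P_def sum_distrib_right[symmetric])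
qed

lemma antimonotone_pairs_common_point:
  fixes w v :: "'i \<Rightarrow> 'a::real_inner"
  assumes "finite F" "F \<noteq> {}"
    and anti: "\<And>i j. i \<in> F \<Longrightarrow> j \<in> F \<Longrightarrow> inner (w i - w j) (v i - v j) \<le> 0"
  shows "\<exists>z. \<forall>i\<in>F. inner (z - w i) (z - v i) \<le> 0"
proof -
  have "\<exists>z. \<forall>i\<in>F. (dist z (midpoint (w i) (v i)))\<^sup>2 \<le> (dist (w i) (v i) / 2)\<^sup>2"
  proof (rule finite_balls_common_point[OF assms(1,2)])
    fix l :: "'i \<Rightarrow> real" assume l: "\<And>i. i \<in> F \<Longrightarrow> 0 \<le> l i" "sum l F = 1"
    define W where "W = (\<Sum>i\<in>F. l i *\<^sub>R w i)"
    define V where "V = (\<Sum>i\<in>F. l i *\<^sub>R v i)"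
    define z where "z = midpoint W V"
    have "(\<Sum>j\<in>F. l j *\<^sub>R midpoint (w j) (v j)) = z"
      by (simp add: z_def W_def V_def midpoint_def scaleR_add_right sum.distrib scaleR_sum_right
          scaleR_scaleR mult.commute)
    moreover have "(\<Sum>i\<in>F. l i *\<^sub>R (z - w i)) = z - W" "(\<Sum>i\<in>F. l i *\<^sub>R (z - v i)) = z - V"
      using l(2) by (simp_all add: W_def V_def scaleR_diff_right sum_subtractf scaleR_sum_left[symmetric])
    moreover have "(\<Sum>i\<in>F. \<Sum>j\<in>F. l i * l j * inner ((z - w i) - (z - w j)) ((z - v i) - (z - v j))) \<le> 0"
      using l(1) anti by (intro sum_nonpos mult_nonneg_nonpos) auto
    ultimately have "(\<Sum>i\<in>F. l i * inner (z - w i) (z - v i)) \<le> inner (z - W) (z - V)"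
      using sum_weighted_inner_variance[OF assms(1) l(2), of "\<lambda>i. z - w i" "\<lambda>i. z - v i"] by simp
    also have "\<dots> \<le> 0"
      by (simp add: z_def inner_diff_diff_eq_midpoint)
    finally show "(\<Sum>i\<in>F. l i * ((dist (\<Sum>j\<in>F. l j *\<^sub>R midpoint (w j) (v j)) (midpoint (w i) (v i)))\<^sup>2
        - (dist (w i) (v i) / 2)\<^sup>2)) \<le> 0"
      unfolding \<open>(\<Sum>j\<in>F. l j *\<^sub>R midpoint (w j) (v j)) = z\<close> inner_diff_diff_eq_midpoint .
  qed
  then show ?thesis
    by (simp add: inner_diff_diff_eq_midpoint)
qed

section \<open>Minty's theorem\<close>

lemma maximally_monotone_memI:
  assumes "maximally_monotone A" and "\<And>w a. a \<in> A w \<Longrightarrow> 0 \<le> inner (b - a) (p - w)"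
  shows "b \<in> A p"
proof -
  define A' where "A' x = (if x = p then insert b (A x) else A x)" for x
  have "monotone_op A"
    using assms(1) by (simp add: maximally_monotone_def)
  moreover have "inner (a - b) (w - p) = inner (b - a) (p - w)" for a w
    by (metis inner_minus_left inner_minus_right minus_diff_eq minus_minus)
  ultimately have "monotone_op A'"
    using assms(2) unfolding monotone_op_def A'_def by (auto split: if_splits)
  moreover have "\<forall>x. A x \<subseteq> A' x"
    by (auto simp: A'_def)
  ultimately have "A' = A"
    using assms(1) by (simp add: maximally_monotone_def)
  then show ?thesis
    by (metis A'_def insertI1)
qed

lemma maximally_monotone_graph_nonempty:
  assumes "maximally_monotone A"
  obtains w a where "a \<in> A w"
  using maximally_monotone_memI[OF assms, of 0 0] by blast

lemma Minty_surjectivity: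
  fixes A :: "'a::{real_inner, complete_space} \<Rightarrow> 'a set"
  assumes "maximally_monotone A" "0 < lam"
  shows "\<exists>z. \<exists>a\<in>A z. y = z + lam *\<^sub>R a"
proof -
  have mono: "monotone_op A"
    using assms(1) by (simp add: maximally_monotone_def)
  define G where "G = {(w, a). a \<in> A w}"
  define v where "v g = y - lam *\<^sub>R snd g" for g :: "'a \<times> 'a"
  define C where "C g = {z. inner (z - fst g) (z - v g) \<le> 0}" for g
  have C_cball: "C g = cball (midpoint (fst g) (v g)) (dist (fst g) (v g) / 2)" for g
    unfolding C_def using inner_diff_le_0_iff_cball by blast
  obtain w0 a0 where "(w0, a0) \<in> G"
    using maximally_monotone_graph_nonempty[OF assms(1)] by (auto simp: G_def)
  text \<open>Debrunner--Flor: any finitely many of the balls \<open>C g\<close> meet, because monotonicity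
    of the graph makes the pairs \<open>(fst g, v g)\<close> antimonotone.\<close>
  moreover have "(\<Inter>g\<in>F. C g) \<noteq> {}" if "finite F" "F \<subseteq> G" "F \<noteq> {}" for F
  proof -
    have "inner (fst g - fst h) (v g - v h) \<le> 0" if "g \<in> F" "h \<in> F" for g h
    proof -
      have "snd g \<in> A (fst g)" "snd h \<in> A (fst h)"
        using \<open>F \<subseteq> G\<close> that by (auto simp: G_def)
      then have "0 \<le> inner (snd g - snd h) (fst g - fst h)"
        using mono unfolding monotone_op_def by blast
      moreover have "v g - v h = - lam *\<^sub>R (snd g - snd h)"
        by (simp add: v_def algebra_simps)
      ultimately show ?thesis
        using \<open>0 < lam\<close> by (simp add: inner_commute)
    qed
    then show ?thesis
      using antimonotone_pairs_common_point[OF that(1,3), of fst v] by (auto simp: C_def)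
  qed
  ultimately obtain p where p: "\<And>g. g \<in> G \<Longrightarrow> p \<in> C g"
    using closed_convex_family_Inter_nonempty[of "(w0, a0)" G C] by (auto simp: C_cball)
  define b where "b = (1 / lam) *\<^sub>R (y - p)"
  have "b \<in> A p"
  proof (rule maximally_monotone_memI[OF assms(1)])
    fix w a assume "a \<in> A w"
    then have "inner (p - w) (p - (y - lam *\<^sub>R a)) \<le> 0"
      using p[of "(w, a)"] by (simp add: G_def C_def v_def)
    moreover have "p - (y - lam *\<^sub>R a) = lam *\<^sub>R (a - b)"
      using \<open>0 < lam\<close> by (simp add: b_def algebra_simps)
    ultimately show "0 \<le> inner (b - a) (p - w)"
      using \<open>0 < lam\<close> by (simp add: inner_commute mult_le_0_iff inner_diff_left inner_diff_right)
  qed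
  moreover have "y = p + lam *\<^sub>R b"
    using \<open>0 < lam\<close> by (simp add: b_def)
  ultimately show ?thesis
    by blast
qed

lemma resolvent_eqI:
  assumes "monotone_op A" "0 < lam" "a \<in> A z" "y = z + lam *\<^sub>R a"
  shows "resolvent lam A y = z"
  unfolding resolvent_def
proof (rule the_equality)
  show "\<exists>a\<in>A z. y = z + lam *\<^sub>R a"
    using assms(3,4) by blast
next
  fix z' assume "\<exists>a'\<in>A z'. y = z' + lam *\<^sub>R a'"
  then obtain a' where "a' \<in> A z'" "y = z' + lam *\<^sub>R a'"
    by blast
  then have "z - z' = lam *\<^sub>R (a' - a)"
    using assms(4) by (simp add: algebra_simps)
  moreover have "0 \<le> inner (a - a') (z - z')"
    using assms(1,3) \<open>a' \<in> A z'\<close> by (simp add: monotone_op_def)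
  moreover have "inner (a - a') (lam *\<^sub>R (a' - a)) = - (lam * (norm (a - a'))\<^sup>2)"
    by (simp add: power2_norm_eq_inner inner_diff_left inner_diff_right inner_commute algebra_simps)
  ultimately have "lam * (norm (a - a'))\<^sup>2 \<le> 0"
    by simp
  then have "a = a'"
    using assms(2) by (simp add: mult_le_0_iff)
  then show "z' = z"
    using \<open>z - z' = lam *\<^sub>R (a' - a)\<close> by simp
qed

lemma resolventE:
  fixes A :: "'a::{real_inner, complete_space} \<Rightarrow> 'a set"
  assumes "maximally_monotone A" "0 < lam"
  obtains a where "a \<in> A (resolvent lam A y)" "y = resolvent lam A y + lam *\<^sub>R a"
proof -
  obtain z a where "a \<in> A z" "y = z + lam *\<^sub>R a"
    using Minty_surjectivity[OF assms] by blast
  moreover have "resolvent lam A y = z"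
    using assms calculation by (intro resolvent_eqI) (auto simp: maximally_monotone_def)
  ultimately show thesis
    using that[of a] by simp
qed

section \<open>One step of the forward-reflected-backward method\<close>

lemma forward_reflected_step_estimate:
  fixes A :: "'a::real_inner \<Rightarrow> 'a set"
  assumes "monotone_op A" and B_mono: "\<And>y z. 0 \<le> inner (B y - B z) (y - z)"
    and zero: "s \<in> A xs" "s + B xs = 0"
    and step: "a \<in> A x'" "x - lam *\<^sub>R B x - lam *\<^sub>R D = x' + lam *\<^sub>R a"
    and D: "norm D \<le> L * norm (x - x_prev)"
    and "0 < lam" "0 \<le> L"
  shows "(norm (x' - xs))\<^sup>2 + 2 * lam * inner (B x' - B x) (xs - x') + (1 - lam * L) * (norm (x' - x))\<^sup>2
    \<le> (norm (x - xs))\<^sup>2 + 2 * lam * inner D (xs - x) + lam * L * (norm (x - x_prev))\<^sup>2"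
proof -
  have "lam *\<^sub>R (a - s) = (x - x') - lam *\<^sub>R (B x - B xs) - lam *\<^sub>R D"
    using step(2) zero(2) by (simp add: algebra_simps eq_neg_iff_add_eq_0[symmetric])
  moreover have "0 \<le> lam * inner (a - s) (x' - xs)"
    using \<open>monotone_op A\<close> step(1) zero(1) \<open>0 < lam\<close> by (simp add: monotone_op_def)
  ultimately have A_mono: "0 \<le> inner (x - x') (x' - xs) - lam * inner (B x - B xs) (x' - xs)
      - lam * inner D (x' - xs)"
    by (metis inner_diff_left inner_scaleR_left)
  have "0 \<le> lam * inner (B x' - B xs) (x' - xs)"
    using B_mono \<open>0 < lam\<close> by simp
  moreover have "2 * inner (x - x') (x' - xs) = (norm (x - xs))\<^sup>2 - (norm (x' - xs))\<^sup>2 - (norm (x' - x))\<^sup>2"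
    unfolding power2_norm_eq_inner
    by (simp add: inner_diff_left inner_diff_right inner_commute algebra_simps)
  moreover have "inner (B x' - B x) (xs - x') = inner (B x - B xs) (x' - xs) - inner (B x' - B xs) (x' - xs)"
    by (simp add: inner_diff_left inner_diff_right algebra_simps)
  moreover have "inner D (x' - xs) = inner D (x' - x) - inner D (xs - x)"
    by (simp add: inner_diff_right)
  moreover have "- (lam * L * ((norm (x - x_prev))\<^sup>2 + (norm (x' - x))\<^sup>2)) \<le> 2 * lam * inner D (x' - x)"
  proof -
    have "- inner D (x' - x) \<le> norm D * norm (x' - x)"
      using Cauchy_Schwarz_ineq2[of D "x' - x"] by linarith
    also have "\<dots> \<le> L * norm (x - x_prev) * norm (x' - x)"
      using D by (simp add: mult_right_mono)
    also have "2 * \<dots> \<le> L * ((norm (x - x_prev))\<^sup>2 + (norm (x' - x))\<^sup>2)"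
      using mult_left_mono[OF sum_squares_bound[of "norm (x - x_prev)" "norm (x' - x)"] \<open>0 \<le> L\<close>]
      by (simp add: algebra_simps)
    finally show ?thesis
      using \<open>0 < lam\<close> mult_left_mono[of _ _ lam] by (fastforce simp: algebra_simps)
  qed
  ultimately show ?thesis
    using A_mono by (simp add: algebra_simps)
qed

lemma forward_reflected_resolvent_step:
  fixes A :: "'a::{real_inner, complete_space} \<Rightarrow> 'a set"
  assumes "maximally_monotone A" and "\<And>y z. 0 \<le> inner (B y - B z) (y - z)"
    and "s \<in> A xs" "s + B xs = 0"
    and x': "x' = resolvent lam A (x - lam *\<^sub>R B x - lam *\<^sub>R D)"
    and "norm D \<le> L * norm (x - x_prev)"
    and "0 < lam" "0 \<le> L" "0 \<le> \<epsilon>" "\<epsilon> \<le> 1/2 - lam * L"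
  shows "(norm (x' - xs))\<^sup>2 + 2 * lam * inner (B x' - B x) (xs - x') + (1/2 + \<epsilon>) * (norm (x' - x))\<^sup>2
    \<le> (norm (x - xs))\<^sup>2 + 2 * lam * inner D (xs - x) + 1/2 * (norm (x - x_prev))\<^sup>2"
proof -
  obtain a where "a \<in> A x'" "x - lam *\<^sub>R B x - lam *\<^sub>R D = x' + lam *\<^sub>R a"
    using resolventE[OF assms(1,7)] x' by metis
  with assms have "(norm (x' - xs))\<^sup>2 + 2 * lam * inner (B x' - B x) (xs - x')
      + (1 - lam * L) * (norm (x' - x))\<^sup>2
    \<le> (norm (x - xs))\<^sup>2 + 2 * lam * inner D (xs - x) + lam * L * (norm (x - x_prev))\<^sup>2"
    by (intro forward_reflected_step_estimate) (auto simp: maximally_monotone_def)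
  moreover have "(1/2 + \<epsilon>) * (norm (x' - x))\<^sup>2 \<le> (1 - lam * L) * (norm (x' - x))\<^sup>2"
    using assms(10) by (intro mult_right_mono) auto
  moreover have "lam * L * (norm (x - x_prev))\<^sup>2 \<le> 1/2 * (norm (x - x_prev))\<^sup>2"
    using assms(9,10) by (intro mult_right_mono) auto
  ultimately show ?thesis
    by linarith
qed

theorem lemma6p1:
  fixes A :: "'a::{real_inner, complete_space} \<Rightarrow> 'a set"
    and Bi :: "nat \<Rightarrow> 'a \<Rightarrow> 'a"
    and B :: "'a \<Rightarrow> 'a"
    and n :: nat and L lam :: real
    and xs x0 xm1 :: 'a
  assumes "maximally_monotone A"
    and "n \<ge> 1"
    and "B = (\<lambda>y. (1 / real n) *\<^sub>R (\<Sum>i=1..n. Bi i y))"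
    and "\<forall>y z. inner (B y - B z) (y - z) \<ge> 0"
    and "\<forall>i\<in>{1..n}. L-lipschitz_on UNIV (Bi i)"
    and "\<exists>a \<in> A xs. a + B xs = 0"
    and "0 < lam" and "lam < 1 / (2 * L)"
  shows "\<exists>\<epsilon>>0. \<forall>(idx :: nat \<Rightarrow> nat) (x :: int \<Rightarrow> 'a).
           (\<forall>k. idx k \<in> {1..n}) \<and> x 0 = x0 \<and> x (-1) = xm1 \<and>
           (\<forall>k::nat. x (int k + 1) = resolvent lam A
               (x (int k) - lam *\<^sub>R B (x (int k))
                 - lam *\<^sub>R (Bi (idx k) (x (int k)) - Bi (idx k) (x (int k - 1)))))
           \<longrightarrow> (\<forall>k::nat.
                 (norm (x (int k + 1) - xs))\<^sup>2
                 + 2 * lam * inner (B (x (int k + 1)) - B (x (int k))) (xs - x (int k + 1))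
                 + (1/2 + \<epsilon>) * (norm (x (int k + 1) - x (int k)))\<^sup>2
               \<le> (norm (x (int k) - xs))\<^sup>2
                 + 2 * lam * inner (Bi (idx k) (x (int k)) - Bi (idx k) (x (int k - 1))) (xs - x (int k))
                 + 1/2 * (norm (x (int k) - x (int k - 1)))\<^sup>2)"
proof -
  have "0 \<le> L"
    using assms(2,5) lipschitz_on_nonneg by fastforce
  moreover have "L \<noteq> 0"
    using assms(7,8) by auto
  ultimately have "lam * L < 1/2"
    using assms(8) by (simp add: field_simps)
  define \<epsilon> where "\<epsilon> = 1/2 - lam * L"
  have "\<epsilon> > 0"
    using \<open>lam * L < 1/2\<close> by (simp add: \<epsilon>_def)
  obtain s where "s \<in> A xs" "s + B xs = 0"
    using assms(6) by blast
  moreover have "norm (Bi i y - Bi i z) \<le> L * norm (y - z)" if "i \<in> {1..n}" for i y z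
    using assms(5) that by (intro lipschitz_on_normD) auto
  text \<open>Only the monotonicity of \<open>B\<close> is used: neither its representation as an average of
    the \<open>Bi\<close> nor the initial values matter for the one-step estimate.\<close>
  ultimately show ?thesis
    using \<open>\<epsilon> > 0\<close> \<open>0 \<le> L\<close> assms(1,4,7)
    by (intro exI[of _ \<epsilon>] conjI allI impI forward_reflected_resolvent_step[where B = B and L = L and s = s])
      (simp_all add: \<epsilon>_def)
qed

end
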